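(* Let $b_0>0$. There exists $\delta_8(b_0)>0$ such that for all $\delta\in(0,\delta_8)$ there exists $s_8(b_0,\delta)\ge1$ such that for all $s_0\ge s_8$: if $(q,b)(s)\in V_{\delta,b_0}(s)$ for all $s\in[s_0,\bar s]$, then $$|P_n(\mathcal R_s(q))(s)|\le CI(s)^{-2\delta}\quad\text{for all }s\in[s_0,\bar s],\ 0\le n\le[M],$$ with $C$ independent of $s,s_0$.
   Context: Fix $p>1$ and an integer $k\ge2$. Let $I(s)=e^{\frac s2(1-\frac1k)}$, $M=\frac{2kp}{p-1}$, $[M]$ the largest integer less than $M$, $e_b(y)=(p-1+by^{2k})^{-1}$. $\mathcal R_s(q)=I(s)^{-2}y^{2k-2}(\alpha_1+\alpha_2y^{2k}e_b+(\alpha_3+\alpha_4y^{2k}e_b)q)$ with $b=b(s)$, $\alpha_1=-2k(2k-1)\frac b{p-1}$, $\alpha_2=4pk^2\frac{b^2}{(p-1)^2}$, $\alpha_3=-2pk(2k-1)\frac b{p-1}$, $\alpha_4=4p(2p-1)k^2\frac{b^2}{(p-1)^2}$. Let $\rho_s(y)=\frac{I(s)}{\sqrt{4\pi}}e^{-I(s)^2y^2/4}$, $\langle f,g\rangle_{L^2_{\rho_s}}=\int fg\rho_s\,dy$, $H_m(y,s)=\sum_{\ell=0}^{[m/2]}\frac{m!}{\ell!(m-2\ell)!}(-I(s)^{-2})^\ell y^{m-2\ell}$; $P_m(g)=\langle g,H_m\rangle_{L^2_{\rho_s}}/\langle H_m,H_m\rangle_{L^2_{\rho_s}}$, $q_m=P_m(q)$,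 $q_-=q-\sum_{m=0}^{[M]}q_mH_m$, $|g|_s=\sup_y\frac{|g(y)|}{I(s)^{-M}+|y|^M}$. The shrinking set $V_{\delta,b_0}(s)$ is the set of pairs $(q,b)$ ($q$ with $(1+|y|^M)^{-1}q\in L^\infty$, $b\in\mathbb R$) with $|q_m|\le I(s)^{-\delta}$ for $0\le m\le[M]$, $m\ne2k$; $|q_{2k}|\le I(s)^{-2\delta}$; $|q_-|_s\le I(s)^{-\delta}$; and $\frac{b_0}2\le b\le2b_0$. *)

theory Defs
  imports "HOL-Analysis.Analysis"
begin

text \<open>Parameters: p > 1 (real), k >= 2 (nat).\<close>

definition I_s :: "nat \<Rightarrow> real \<Rightarrow> real" where
  "I_s k s = exp (s / 2 * (1 - 1 / real k))"

definition M_exp :: "real \<Rightarrow> nat \<Rightarrow> real" where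
  "M_exp p k = 2 * real k * p / (p - 1)"

text \<open>[M]: the largest integer strictly less than M.\<close>
definition M_floor :: "real \<Rightarrow> nat \<Rightarrow> nat" where
  "M_floor p k = nat (\<lceil>M_exp p k\<rceil> - 1)"

definition e_b :: "real \<Rightarrow> nat \<Rightarrow> real \<Rightarrow> real \<Rightarrow> real" where
  "e_b p k b y = 1 / (p - 1 + b * y ^ (2 * k))"

definition R_op :: "real \<Rightarrow> nat \<Rightarrow> real \<Rightarrow> real \<Rightarrow> (real \<Rightarrow> real) \<Rightarrow> real \<Rightarrow> real" where
  "R_op p k s b q y =
    (let a1 = - 2 * real k * (2 * real k - 1) * b / (p - 1);
         a2 = 4 * p * (real k)^2 * b^2 / (p - 1)^2;
         a3 = - 2 * p * real k * (2 * real k - 1) * b / (p - 1);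
         a4 = 4 * p * (2 * p - 1) * (real k)^2 * b^2 / (p - 1)^2;
         E = e_b p k b y
     in (I_s k s) powr (-2) * y ^ (2 * k - 2) *
        (a1 + a2 * y ^ (2 * k) * E + (a3 + a4 * y ^ (2 * k) * E) * q y))"

definition rho_s :: "nat \<Rightarrow> real \<Rightarrow> real \<Rightarrow> real" where
  "rho_s k s y = I_s k s / sqrt (4 * pi) * exp (- (((I_s k s) ^ 2) * (y ^ 2)) / 4)"

definition inner_rho :: "nat \<Rightarrow> real \<Rightarrow> (real \<Rightarrow> real) \<Rightarrow> (real \<Rightarrow> real) \<Rightarrow> real" where
  "inner_rho k s f g = (\<integral>y. f y * g y * rho_s k s y \<partial>lborel)"

definition H_poly :: "nat \<Rightarrow> nat \<Rightarrow> real \<Rightarrow> real \<Rightarrow> real" where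
  "H_poly k m s y = (\<Sum>l = 0..m div 2.
      fact m / (fact l * fact (m - 2 * l)) * (- ((I_s k s) powr (-2))) ^ l * y ^ (m - 2 * l))"

definition P_proj :: "nat \<Rightarrow> nat \<Rightarrow> real \<Rightarrow> (real \<Rightarrow> real) \<Rightarrow> real" where
  "P_proj k m s g = inner_rho k s g (H_poly k m s) / inner_rho k s (H_poly k m s) (H_poly k m s)"

definition q_minus :: "real \<Rightarrow> nat \<Rightarrow> real \<Rightarrow> (real \<Rightarrow> real) \<Rightarrow> real \<Rightarrow> real" where
  "q_minus p k s q y = q y - (\<Sum>m = 0..M_floor p k. P_proj k m s q * H_poly k m s y)"

text \<open>The weighted sup-norm |g|_s (as an extended real, so it is meaningful for unbounded g).\<close>
definition snorm :: "real \<Rightarrow> nat \<Rightarrow> real \<Rightarrow> (real \<Rightarrow> real) \<Rightarrow> ereal" where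
  "snorm p k s g = (SUP y. ereal (\<bar>g y\<bar> / ((I_s k s) powr (- M_exp p k) + \<bar>y\<bar> powr M_exp p k)))"

text \<open>Shrinking set V_{delta,b0}(s). The condition that (1+|y|^M)^{-1} q is in L^infinity is
  rendered as: q is Borel measurable and (1+|y|^M)^{-1} q is bounded.\<close>
definition in_V :: "real \<Rightarrow> nat \<Rightarrow> real \<Rightarrow> real \<Rightarrow> real \<Rightarrow> (real \<Rightarrow> real) \<Rightarrow> real \<Rightarrow> bool" where
  "in_V p k \<delta> b0 s q b \<longleftrightarrow>
     q \<in> borel_measurable borel \<and>
     (\<exists>K. \<forall>y. \<bar>q y\<bar> / (1 + \<bar>y\<bar> powr M_exp p k) \<le> K) \<and>
     (\<forall>m \<le> M_floor p k. m \<noteq> 2 * k \<longrightarrow> \<bar>P_proj k m s q\<bar> \<le> (I_s k s) powr (- \<delta>)) \<and>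
     \<bar>P_proj k (2 * k) s q\<bar> \<le> (I_s k s) powr (- 2 * \<delta>) \<and>
     snorm p k s (q_minus p k s q) \<le> ereal ((I_s k s) powr (- \<delta>)) \<and>
     b0 / 2 \<le> b \<and> b \<le> 2 * b0"

end

theory Submission
  imports Defs "HOL-Probability.Distributions" "HOL-Computational_Algebra.Polynomial"
begin

text \<open>
  Substituting \<open>y = \<surd>2 z / I(s)\<close> turns the weight \<open>\<rho>\<^sub>s\<close> into the standard Gaussian density and
  \<open>H\<^sub>m\<close> into \<open>(\<surd>2/I(s))\<^sup>m He\<^sub>m\<close>, where \<open>He\<^sub>m\<close> is the probabilists' Hermite polynomial,
  orthogonal to all polynomials of lower degree. So \<open>P\<^sub>n\<close> annihilates polynomials of degree
  \<open>< n\<close>, and \<open>|P\<^sub>n g| \<le> K C\<^sub>n\<close> whenever \<open>g\<close> differs from such a polynomial by at most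
  \<open>K I(s)\<^sup>-\<^sup>n (1 + I(s)|y|)\<^sup>N\<close>. The function \<open>R\<^sub>s(q)\<close> has this property with
  \<open>K = O(I(s)\<^sup>-\<^sup>2\<^sup>\<delta>)\<close>: it carries the factor \<open>I(s)\<^sup>-\<^sup>2\<close>; each \<open>y\<^sup>d e\<^sub>b(y)\<close> is a
  polynomial up to such an error after finitely many steps of the geometric expansion of \<open>e\<^sub>b\<close>;
  the modes \<open>q\<^sub>m\<close> are \<open>O(I(s)\<^sup>-\<^sup>\<delta>)\<close>; and \<open>q\<^sub>-\<close> is bounded pointwise through \<open>|q\<^sub>-|\<^sub>s\<close>.
  In particular \<open>\<delta>\<^sub>8 = 1\<close> and \<open>s\<^sub>8 = 1\<close> suffice.
\<close>

section \<open>Gaussian moments and Hermite polynomials\<close>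

definition std_normal_poly_moment :: "real poly \<Rightarrow> nat \<Rightarrow> real" where
  "std_normal_poly_moment f j = (\<integral>z. std_normal_density z * (z ^ j * poly f z) \<partial>lborel)"

lemma integrable_std_normal_poly_moment:
  "integrable lborel (\<lambda>z. std_normal_density z * (z ^ j * poly f z))"
proof (induction f arbitrary: j rule: pCons_induct)
  case (pCons a f)
  have "(\<lambda>z. std_normal_density z * (z ^ j * poly (pCons a f) z)) =
     (\<lambda>z. a * (std_normal_density z * z ^ j) + std_normal_density z * (z ^ Suc j * poly f z))"
    by (auto simp: algebra_simps)
  then show ?case
    by (simp only:) (intro Bochner_Integration.integrable_add integrable_mult_right
        integrable_std_normal_moment pCons.IH)
qed simp

lemma std_normal_poly_moment_add:
  "std_normal_poly_moment (f + g) j = std_normal_poly_moment f j + std_normal_poly_moment g j"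
proof -
  have "(\<lambda>z. std_normal_density z * (z ^ j * poly (f + g) z)) =
     (\<lambda>z. std_normal_density z * (z ^ j * poly f z) + std_normal_density z * (z ^ j * poly g z))"
    by (simp add: algebra_simps)
  then show ?thesis
    unfolding std_normal_poly_moment_def
    by (simp add: Bochner_Integration.integral_add integrable_std_normal_poly_moment)
qed

lemma std_normal_poly_moment_diff:
  "std_normal_poly_moment (f - g) j = std_normal_poly_moment f j - std_normal_poly_moment g j"
  using std_normal_poly_moment_add[of "f - g" g j] by simp

lemma std_normal_poly_moment_pCons:
  "std_normal_poly_moment (pCons a f) j = a * std_normal_poly_moment 1 j + std_normal_poly_moment f (Suc j)"
proof -
  have "pCons a f = [:a:] + pCons 0 f" by simp
  moreover have "std_normal_poly_moment [:a:] j = a * std_normal_poly_moment 1 j"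
    unfolding std_normal_poly_moment_def
    by (subst integral_mult_right_zero[symmetric]) (simp add: algebra_simps)
  moreover have "std_normal_poly_moment (pCons 0 f) j = std_normal_poly_moment f (Suc j)"
    unfolding std_normal_poly_moment_def by (simp add: algebra_simps)
  ultimately show ?thesis by (simp only: std_normal_poly_moment_add)
qed

lemma std_normal_moment_Suc:
  "std_normal_poly_moment 1 (Suc j) = real j * std_normal_poly_moment 1 (j - 1)"
proof -
  have moment: "std_normal_poly_moment 1 i = (\<integral>z. std_normal_density z * z ^ i \<partial>lborel)" for i
    unfolding std_normal_poly_moment_def by simp
  show ?thesis
  proof (cases "even j")
    case True
    then obtain m where j: "j = 2 * m" by (auto elim: evenE)
    have "j - 1 = 2 * (m - 1) + 1" if "m > 0" using that j by simp
    then show ?thesis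
      unfolding moment using j integral_std_normal_moment_odd[of m] integral_std_normal_moment_odd[of "m - 1"]
      by (cases "m = 0") auto
  next
    case False
    then obtain m where j: "j = 2 * m + 1" by (metis oddE)
    have "Suc j = 2 * Suc m" "j - 1 = 2 * m" using j by simp_all
    then have "std_normal_poly_moment 1 (Suc j) = fact (2 * Suc m) / (2 ^ Suc m * fact (Suc m))"
      "std_normal_poly_moment 1 (j - 1) = fact (2 * m) / (2 ^ m * fact m)"
      unfolding moment by (simp_all only: integral_std_normal_moment_even)
    moreover have "(fact (2 * Suc m) :: real) = (2 * real m + 2) * (real j * fact (2 * m))"
      "(2 ^ Suc m * fact (Suc m) :: real) = (2 * real m + 2) * (2 ^ m * fact m)"
      using j by (simp_all add: algebra_simps)
    ultimately show ?thesis
      by (simp only: mult_divide_mult_cancel_left[of "2 * real m + 2"] times_divide_eq_right)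
  qed
qed

lemma std_normal_stein:
  "std_normal_poly_moment f (Suc j) = real j * std_normal_poly_moment f (j - 1) + std_normal_poly_moment (pderiv f) j"
proof (induction f arbitrary: j rule: pCons_induct)
  case (pCons a f)
  have "real j * std_normal_poly_moment f j = real j * std_normal_poly_moment f (Suc (j - 1))"
    by (cases j) auto
  moreover have "std_normal_poly_moment (pderiv (pCons a f)) j =
      std_normal_poly_moment f j + std_normal_poly_moment (pderiv f) (Suc j)"
    using std_normal_poly_moment_pCons[of 0 "pderiv f" j]
    by (simp add: pderiv_pCons std_normal_poly_moment_add)
  ultimately show ?case
    using pCons.IH[of "Suc j"] std_normal_moment_Suc[of j]
    by (simp add: std_normal_poly_moment_pCons algebra_simps)
qed (simp add: std_normal_poly_moment_def)

fun hermite :: "nat \<Rightarrow> real poly" where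
  "hermite 0 = 1"
| "hermite (Suc n) = pCons 0 (hermite n) - pderiv (hermite n)"

declare hermite.simps(2) [simp del]

lemma std_normal_poly_moment_hermite_Suc:
  "std_normal_poly_moment (hermite (Suc n)) j = real j * std_normal_poly_moment (hermite n) (j - 1)"
  using std_normal_poly_moment_pCons[of 0 "hermite n" j] std_normal_stein[of "hermite n" j]
  by (simp add: hermite.simps(2) std_normal_poly_moment_diff)

lemma hermite_orthogonal: "j < n \<Longrightarrow> std_normal_poly_moment (hermite n) j = 0"
proof (induction n arbitrary: j)
  case (Suc n)
  then show ?case
    by (cases j) (simp_all add: std_normal_poly_moment_hermite_Suc)
qed simp

text \<open>The coefficient of \<open>z ^ i\<close> in \<open>hermite (i + 2 * l)\<close>.\<close>
definition hermite_monomial_coeff :: "nat \<Rightarrow> nat \<Rightarrow> real" where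
  "hermite_monomial_coeff i l = fact (i + 2 * l) / (fact l * fact i) * (- 1 / 2) ^ l"

lemma hermite_monomial_coeff_Suc_Suc:
  "hermite_monomial_coeff (Suc i) (Suc l) =
     hermite_monomial_coeff i (Suc l) - real (i + 2) * hermite_monomial_coeff (i + 2) l"
proof -
  have "Suc i + 2 * Suc l = Suc (Suc (Suc (i + 2 * l)))" "i + 2 * Suc l = Suc (Suc (i + 2 * l))"
       "i + 2 + 2 * l = Suc (Suc (i + 2 * l))" "i + 2 = Suc (Suc i)" by simp_all
  then show ?thesis
    unfolding hermite_monomial_coeff_def
    by (simp only: fact_Suc power_Suc) (simp add: field_simps del: of_nat_Suc, simp add: algebra_simps)
qed

lemma hermite_monomial_coeff_0_Suc: "hermite_monomial_coeff 0 (Suc l) = - hermite_monomial_coeff 1 l"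
proof -
  have "2 * Suc l = Suc (Suc (2 * l))" "1 + 2 * l = Suc (2 * l)" by simp_all
  then show ?thesis
    unfolding hermite_monomial_coeff_def
    by (simp only: fact_Suc power_Suc) (simp add: field_simps del: of_nat_Suc, simp add: algebra_simps)
qed

definition hermite_coeff :: "nat \<Rightarrow> nat \<Rightarrow> real" where
  "hermite_coeff n i = (if i \<le> n \<and> even (n - i) then hermite_monomial_coeff i ((n - i) div 2) else 0)"

lemma hermite_coeff_Suc:
  "hermite_coeff (Suc n) i =
     (if i = 0 then 0 else hermite_coeff n (i - 1)) - real (Suc i) * hermite_coeff n (Suc i)"
proof (cases "i \<le> Suc n \<and> even (Suc n - i)")
  case False
  then show ?thesis
    unfolding hermite_coeff_def by (auto simp: even_diff_nat)
next
  case True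
  then obtain l where l: "Suc n = i + 2 * l" by (metis evenE le_add_diff_inverse)
  show ?thesis
  proof (cases l)
    case 0
    then show ?thesis
      using l unfolding hermite_coeff_def hermite_monomial_coeff_def by auto
  next
    case (Suc l')
    have "hermite_coeff n (Suc i) = hermite_monomial_coeff (Suc i) l'"
      using l Suc unfolding hermite_coeff_def by simp
    moreover have "hermite_coeff (Suc n) i = hermite_monomial_coeff i l"
      using l unfolding hermite_coeff_def by simp
    moreover have "hermite_coeff n (i - 1) = hermite_monomial_coeff (i - 1) l" if "i > 0"
      using l that unfolding hermite_coeff_def by auto
    ultimately show ?thesis
      using Suc hermite_monomial_coeff_0_Suc[of l'] hermite_monomial_coeff_Suc_Suc[of "i - 1" l']
      by (cases i) (simp_all add: add.commute)
  qed
qed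

lemma coeff_hermite: "coeff (hermite n) i = hermite_coeff n i"
proof (induction n arbitrary: i)
  case 0
  then show ?case
    unfolding hermite_coeff_def hermite_monomial_coeff_def by simp
next
  case (Suc n)
  then show ?case
    by (cases i) (simp_all add: hermite.simps(2) coeff_pCons coeff_pderiv hermite_coeff_Suc)
qed

lemma poly_hermite:
  "poly (hermite n) z = (\<Sum>l = 0..n div 2. fact n / (fact l * fact (n - 2 * l)) * (- 1 / 2) ^ l * z ^ (n - 2 * l))"
proof -
  have deg: "degree (hermite n) \<le> n"
    by (rule degree_le) (simp add: coeff_hermite hermite_coeff_def)
  have "poly (hermite n) z = (\<Sum>i\<le>n. coeff (hermite n) i * z ^ i)"
    using deg unfolding poly_altdef by (intro sum.mono_neutral_left) (auto simp: coeff_eq_0)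
  also have "\<dots> = (\<Sum>i\<in>(\<lambda>l. n - 2 * l) ` {0..n div 2}. coeff (hermite n) i * z ^ i)"
  proof (rule sum.mono_neutral_right)
    show "\<forall>i\<in>{..n} - (\<lambda>l. n - 2 * l) ` {0..n div 2}. coeff (hermite n) i * z ^ i = 0"
    proof
      fix i assume i: "i \<in> {..n} - (\<lambda>l. n - 2 * l) ` {0..n div 2}"
      have "odd (n - i)"
      proof
        assume "even (n - i)"
        then have "i = n - 2 * ((n - i) div 2)" "(n - i) div 2 \<in> {0..n div 2}" using i by auto
        then show False using i by blast
      qed
      then show "coeff (hermite n) i * z ^ i = 0" by (simp add: coeff_hermite hermite_coeff_def)
    qed
  qed auto
  also have "\<dots> = (\<Sum>l = 0..n div 2. coeff (hermite n) (n - 2 * l) * z ^ (n - 2 * l))"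
    by (rule sum.reindex_cong[where l = "\<lambda>l. n - 2 * l"]) (auto simp: inj_on_def)
  also have "\<dots> = (\<Sum>l = 0..n div 2. fact n / (fact l * fact (n - 2 * l)) * (- 1 / 2) ^ l * z ^ (n - 2 * l))"
    by (rule sum.cong) (auto simp: coeff_hermite hermite_coeff_def hermite_monomial_coeff_def)
  finally show ?thesis .
qed

section \<open>The projections \<open>P_proj\<close> in Gaussian coordinates\<close>

lemma I_s_pos: "I_s k s > 0"
  unfolding I_s_def by simp

lemma I_s_ge_1: "k \<ge> 1 \<Longrightarrow> s \<ge> 0 \<Longrightarrow> I_s k s \<ge> 1"
  unfolding I_s_def by (simp add: divide_le_eq_1)

lemma H_poly_rescale:
  assumes "\<sigma> = sqrt 2 / I_s k s"
  shows "H_poly k m s (\<sigma> * z) = \<sigma> ^ m * poly (hermite m) z"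
proof -
  have I: "I_s k s > 0" by (rule I_s_pos)
  have a: "- (I_s k s powr (-2)) = \<sigma> ^ 2 * (- 1 / 2)"
    using I unfolding assms by (simp add: powr_minus power_divide inverse_eq_divide)
  have "c * (\<sigma> ^ 2 * (- 1 / 2)) ^ l * (\<sigma> * z) ^ (m - 2 * l) = \<sigma> ^ m * (c * (- 1 / 2) ^ l * z ^ (m - 2 * l))"
    if "l \<in> {0..m div 2}" for l c
  proof -
    from that have "\<sigma> ^ m = \<sigma> ^ (2 * l + (m - 2 * l))" by auto
    then have "\<sigma> ^ m = (\<sigma> ^ 2) ^ l * \<sigma> ^ (m - 2 * l)"
      by (simp only: power_add power_mult)
    then show ?thesis by (simp only: power_mult_distrib ac_simps)
  qed
  then show ?thesis
    unfolding H_poly_def poly_hermite sum_distrib_left a by (intro sum.cong refl)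
qed

lemma rho_s_rescale:
  assumes "\<sigma> = sqrt 2 / I_s k s"
  shows "\<sigma> * rho_s k s (\<sigma> * z) = std_normal_density z"
proof -
  have I: "I_s k s > 0" by (rule I_s_pos)
  have "I_s k s ^ 2 * (\<sigma> * z) ^ 2 = 2 * z ^ 2" "\<sigma> * I_s k s = sqrt 2"
    using I unfolding assms by (simp_all add: power_mult_distrib power_divide)
  moreover have "sqrt (4 * pi) = sqrt 2 * sqrt (2 * pi)"
    by (simp add: real_sqrt_mult[symmetric])
  ultimately have "\<sigma> * rho_s k s (\<sigma> * z) = sqrt 2 / (sqrt 2 * sqrt (2 * pi)) * exp (- (2 * z ^ 2) / 4)"
    unfolding rho_s_def by (metis (no_types, opaque_lifting) mult.assoc times_divide_eq_right)
  then show ?thesis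
    unfolding std_normal_density_def by simp
qed

lemma inner_rho_rescale:
  assumes "\<sigma> = sqrt 2 / I_s k s"
  shows "inner_rho k s f g = (\<integral>z. std_normal_density z * (f (\<sigma> * z) * g (\<sigma> * z)) \<partial>lborel)"
proof -
  have \<sigma>: "\<sigma> > 0" using assms I_s_pos[of k s] by simp
  have "inner_rho k s f g = \<bar>\<sigma>\<bar> *\<^sub>R (\<integral>z. f (0 + \<sigma> * z) * g (0 + \<sigma> * z) * rho_s k s (0 + \<sigma> * z) \<partial>lborel)"
    unfolding inner_rho_def by (rule lborel_integral_real_affine) (use \<sigma> in simp)
  also have "\<dots> = \<sigma> * (\<integral>z. f (\<sigma> * z) * g (\<sigma> * z) * rho_s k s (\<sigma> * z) \<partial>lborel)"
    using \<sigma> by simp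
  also have "\<dots> = (\<integral>z. (\<sigma> * rho_s k s (\<sigma> * z)) * (f (\<sigma> * z) * g (\<sigma> * z)) \<partial>lborel)"
    by (subst integral_mult_right_zero[symmetric]) (simp add: ac_simps)
  finally show ?thesis
    unfolding rho_s_rescale[OF assms] .
qed

lemma borel_measurable_poly [measurable]: "(\<lambda>z. poly p z :: real) \<in> borel_measurable borel"
  by (intro borel_measurable_continuous_onI continuous_intros)

lemma integrable_std_normal_weighted_poly:
  "integrable lborel (\<lambda>z. std_normal_density z * ((1 + sqrt 2 * \<bar>z\<bar>) ^ N * \<bar>poly p z\<bar>))"
proof (rule Bochner_Integration.integrable_bound)
  show "integrable lborel (\<lambda>z. \<bar>std_normal_density z * (z ^ 0 * poly ([:2, 0, 1:] ^ N * p) z)\<bar>)"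
    by (intro integrable_abs integrable_std_normal_poly_moment)
  show "AE z in lborel. norm (std_normal_density z * ((1 + sqrt 2 * \<bar>z\<bar>) ^ N * \<bar>poly p z\<bar>))
      \<le> norm (\<bar>std_normal_density z * (z ^ 0 * poly ([:2, 0, 1:] ^ N * p) z)\<bar>)"
  proof (rule AE_I2)
    fix z :: real
    have "sqrt 2 * \<bar>z\<bar> * 2 \<le> 2 + z\<^sup>2"
      using arith_geo_mean_sqrt[of 2 "z\<^sup>2"] by (simp add: real_sqrt_mult)
    moreover have "poly [:2, 0, 1:] z = 2 + z\<^sup>2"
      by (simp add: power2_eq_square)
    ultimately have "1 + sqrt 2 * \<bar>z\<bar> \<le> poly [:2, 0, 1:] z"
      using zero_le_power2[of z] by linarith
    then have "(1 + sqrt 2 * \<bar>z\<bar>) ^ N * \<bar>poly p z\<bar> \<le> \<bar>poly ([:2, 0, 1:] ^ N * p) z\<bar>"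
      by (simp add: abs_mult poly_power power_abs mult_right_mono power_mono)
    then show "norm (std_normal_density z * ((1 + sqrt 2 * \<bar>z\<bar>) ^ N * \<bar>poly p z\<bar>))
        \<le> norm (\<bar>std_normal_density z * (z ^ 0 * poly ([:2, 0, 1:] ^ N * p) z)\<bar>)"
      by (simp add: abs_mult mult_left_mono)
  qed
qed measurable

definition hermite_proj_const :: "nat \<Rightarrow> nat \<Rightarrow> real" where
  "hermite_proj_const n N =
     (\<integral>z. std_normal_density z * ((1 + sqrt 2 * \<bar>z\<bar>) ^ N * \<bar>poly (hermite n) z\<bar>) \<partial>lborel) /
     (sqrt 2 ^ n * (\<integral>z. std_normal_density z * (poly (hermite n) z * poly (hermite n) z) \<partial>lborel))"

lemma hermite_proj_const_nonneg: "hermite_proj_const n N \<ge> 0"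
  unfolding hermite_proj_const_def
  by (intro divide_nonneg_nonneg mult_nonneg_nonneg integral_nonneg_AE) auto

lemma std_normal_hermite_orthogonal_poly:
  shows "integrable lborel (\<lambda>z. std_normal_density z * ((\<Sum>i<n. c i * z ^ i) * poly (hermite n) z))"
    and "(\<integral>z. std_normal_density z * ((\<Sum>i<n. c i * z ^ i) * poly (hermite n) z) \<partial>lborel) = 0"
proof -
  have expand: "std_normal_density z * ((\<Sum>i<n. c i * z ^ i) * poly (hermite n) z) =
      (\<Sum>i<n. c i * (std_normal_density z * (z ^ i * poly (hermite n) z)))" for z
    unfolding sum_distrib_left sum_distrib_right by (simp add: ac_simps)
  show "integrable lborel (\<lambda>z. std_normal_density z * ((\<Sum>i<n. c i * z ^ i) * poly (hermite n) z))"
    unfolding expand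
    by (intro Bochner_Integration.integrable_sum integrable_mult_right integrable_std_normal_poly_moment)
  show "(\<integral>z. std_normal_density z * ((\<Sum>i<n. c i * z ^ i) * poly (hermite n) z) \<partial>lborel) = 0"
    unfolding expand
    by (simp add: integrable_std_normal_poly_moment hermite_orthogonal std_normal_poly_moment_def[symmetric])
qed

lemma std_normal_hermite_integral_bound:
  assumes g: "g \<in> borel_measurable borel"
    and approx: "\<And>z. \<bar>g z - (\<Sum>i<n. c i * z ^ i)\<bar> \<le> B * (1 + sqrt 2 * \<bar>z\<bar>) ^ N"
  shows "\<bar>\<integral>z. std_normal_density z * (g z * poly (hermite n) z) \<partial>lborel\<bar>
    \<le> B * (\<integral>z. std_normal_density z * ((1 + sqrt 2 * \<bar>z\<bar>) ^ N * \<bar>poly (hermite n) z\<bar>) \<partial>lborel)"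
proof -
  define h where "h = poly (hermite n)"
  define T where "T z = (\<Sum>i<n. c i * z ^ i)" for z :: real
  define W where "W z = std_normal_density z * ((1 + sqrt 2 * \<bar>z\<bar>) ^ N * \<bar>h z\<bar>)" for z
  have int_T: "integrable lborel (\<lambda>z. std_normal_density z * (T z * h z))"
    and orth: "(\<integral>z. std_normal_density z * (T z * h z) \<partial>lborel) = 0"
    unfolding T_def h_def by (rule std_normal_hermite_orthogonal_poly)+
  have rem_le: "\<bar>std_normal_density z * ((g z - T z) * h z)\<bar> \<le> B * W z" for z
  proof -
    have "\<bar>(g z - T z) * h z\<bar> \<le> B * (1 + sqrt 2 * \<bar>z\<bar>) ^ N * \<bar>h z\<bar>"
      unfolding abs_mult T_def by (rule mult_right_mono[OF approx]) simp
    then have "std_normal_density z * \<bar>(g z - T z) * h z\<bar> \<le> std_normal_density z * (B * (1 + sqrt 2 * \<bar>z\<bar>) ^ N * \<bar>h z\<bar>)"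
      by (rule mult_left_mono) simp
    then show ?thesis
      unfolding W_def by (simp add: abs_mult ac_simps)
  qed
  have int_W: "integrable lborel (\<lambda>z. B * W z)"
    unfolding W_def h_def by (intro integrable_mult_right integrable_std_normal_weighted_poly)
  have int_rem: "integrable lborel (\<lambda>z. std_normal_density z * ((g z - T z) * h z))"
  proof (rule Bochner_Integration.integrable_bound[OF int_W])
    show "(\<lambda>z. std_normal_density z * ((g z - T z) * h z)) \<in> borel_measurable lborel"
      unfolding T_def h_def using g by measurable
    show "AE z in lborel. norm (std_normal_density z * ((g z - T z) * h z)) \<le> norm (B * W z)"
      using rem_le by (intro AE_I2) (metis abs_ge_self order_trans real_norm_def)
  qed
  have "(\<integral>z. std_normal_density z * (g z * h z) \<partial>lborel) =
      (\<integral>z. std_normal_density z * (T z * h z) + std_normal_density z * ((g z - T z) * h z) \<partial>lborel)"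
    by (simp add: algebra_simps)
  also have "\<dots> = (\<integral>z. std_normal_density z * ((g z - T z) * h z) \<partial>lborel)"
    using int_T int_rem orth by simp
  finally have "\<bar>\<integral>z. std_normal_density z * (g z * h z) \<partial>lborel\<bar> \<le> (\<integral>z. B * W z \<partial>lborel)"
    using integral_abs_bound_integral[OF int_rem int_W] rem_le by simp
  then show ?thesis
    unfolding W_def h_def by simp
qed

lemma P_proj_rescale:
  assumes "\<sigma> = sqrt 2 / I_s k s"
  shows "P_proj k n s g = (\<integral>z. std_normal_density z * (g (\<sigma> * z) * poly (hermite n) z) \<partial>lborel) /
    (\<sigma> ^ n * (\<integral>z. std_normal_density z * (poly (hermite n) z * poly (hermite n) z) \<partial>lborel))"
proof -
  have "\<sigma> > 0" using assms I_s_pos[of k s] by simp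
  moreover have "inner_rho k s g (H_poly k n s) =
      \<sigma> ^ n * (\<integral>z. std_normal_density z * (g (\<sigma> * z) * poly (hermite n) z) \<partial>lborel)"
    unfolding inner_rho_rescale[OF assms] H_poly_rescale[OF assms]
    by (subst integral_mult_right_zero[symmetric]) (simp add: ac_simps)
  moreover have "inner_rho k s (H_poly k n s) (H_poly k n s) =
      \<sigma> ^ n * \<sigma> ^ n * (\<integral>z. std_normal_density z * (poly (hermite n) z * poly (hermite n) z) \<partial>lborel)"
    unfolding inner_rho_rescale[OF assms] H_poly_rescale[OF assms]
    by (subst integral_mult_right_zero[symmetric]) (simp add: ac_simps)
  ultimately show ?thesis
    unfolding P_proj_def by simp
qed

lemma P_proj_bound:
  assumes g: "g \<in> borel_measurable borel"
    and approx: "\<And>y. \<bar>g y - (\<Sum>i<n. c i * y ^ i)\<bar> \<le> K / I_s k s ^ n * (1 + I_s k s * \<bar>y\<bar>) ^ N"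
  shows "\<bar>P_proj k n s g\<bar> \<le> K * hermite_proj_const n N"
proof -
  define I where "I = I_s k s"
  define \<sigma> where "\<sigma> = sqrt 2 / I"
  define A where "A = (\<integral>z. std_normal_density z * ((1 + sqrt 2 * \<bar>z\<bar>) ^ N * \<bar>poly (hermite n) z\<bar>) \<partial>lborel)"
  define D where "D = (\<integral>z. std_normal_density z * (poly (hermite n) z * poly (hermite n) z) \<partial>lborel)"
  define X where "X = (\<integral>z. std_normal_density z * (g (\<sigma> * z) * poly (hermite n) z) \<partial>lborel)"
  have I: "I > 0" unfolding I_def by (rule I_s_pos)
  then have \<sigma>: "\<sigma> > 0" "I * \<sigma> = sqrt 2" unfolding \<sigma>_def by simp_all
  have K: "K \<ge> 0"
    using order_trans[OF abs_ge_zero approx[of 0]] zero_less_power[OF I, of n]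
    unfolding I_def by (simp add: zero_le_divide_iff)
  have P: "P_proj k n s g = X / (\<sigma> ^ n * D)"
    unfolding X_def D_def by (rule P_proj_rescale) (simp add: \<sigma>_def I_def)
  have "\<bar>g (\<sigma> * z) - (\<Sum>i<n. (c i * \<sigma> ^ i) * z ^ i)\<bar> \<le> K / I ^ n * (1 + sqrt 2 * \<bar>z\<bar>) ^ N" for z
    using approx[of "\<sigma> * z"] \<sigma>
    by (simp add: I_def[symmetric] abs_mult power_mult_distrib mult.assoc[symmetric])
  then have X: "\<bar>X\<bar> \<le> K / I ^ n * A"
    unfolding X_def A_def by (intro std_normal_hermite_integral_bound) (use g \<sigma> in simp_all)
  show ?thesis
  proof (cases "D = 0")
    case True
    then show ?thesis using P K hermite_proj_const_nonneg by simp
  next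
    case False
    moreover have "D \<ge> 0"
      unfolding D_def by (intro integral_nonneg_AE) auto
    ultimately have "D > 0" by simp
    then have "\<bar>P_proj k n s g\<bar> = \<bar>X\<bar> / (\<sigma> ^ n * D)"
      unfolding P using \<sigma> by (simp add: abs_divide)
    also have "\<dots> \<le> (K / I ^ n * A) / (\<sigma> ^ n * D)"
      by (rule divide_right_mono[OF X]) (use \<sigma> \<open>D > 0\<close> in simp)
    also have "\<dots> = K * (A / (sqrt 2 ^ n * D))"
      using I \<sigma> by (simp add: \<sigma>(2)[symmetric] power_mult_distrib field_simps)
    finally show ?thesis
      unfolding hermite_proj_const_def A_def D_def .
  qed
qed

section \<open>Polynomials of low degree up to a weighted error\<close>

definition poly_approx :: "real \<Rightarrow> nat \<Rightarrow> (real \<Rightarrow> real) \<Rightarrow> real \<Rightarrow> nat \<Rightarrow> bool" where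
  "poly_approx I n f K N \<longleftrightarrow> (\<exists>c. \<forall>y. \<bar>f y - (\<Sum>i<n. c i * y ^ i)\<bar> \<le> K / I ^ n * (1 + I * \<bar>y\<bar>) ^ N)"

lemma poly_approx_nonneg:
  assumes "poly_approx I n f K N" "I > 0"
  shows "K \<ge> 0"
proof -
  obtain c where "\<bar>f 0 - (\<Sum>i<n. c i * 0 ^ i)\<bar> \<le> K / I ^ n * (1 + I * \<bar>0\<bar>) ^ N"
    using assms(1) unfolding poly_approx_def by blast
  then have "0 \<le> K / I ^ n"
    by (simp add: order_trans[OF abs_ge_zero])
  then show ?thesis using zero_less_power[OF assms(2), of n] by (simp add: zero_le_divide_iff)
qed

lemma poly_approx_mono:
  assumes "poly_approx I n f K N" "K \<le> K'" "N \<le> N'" "I > 0"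
  shows "poly_approx I n f K' N'"
proof -
  obtain c where c: "\<And>y. \<bar>f y - (\<Sum>i<n. c i * y ^ i)\<bar> \<le> K / I ^ n * (1 + I * \<bar>y\<bar>) ^ N"
    using assms(1) unfolding poly_approx_def by blast
  have "K / I ^ n * (1 + I * \<bar>y\<bar>) ^ N \<le> K' / I ^ n * (1 + I * \<bar>y\<bar>) ^ N'" for y
    using assms poly_approx_nonneg[OF assms(1,4)]
    by (intro mult_mono divide_right_mono power_increasing) auto
  then show ?thesis
    unfolding poly_approx_def using c by (intro exI[of _ c] allI order_trans[OF c])
qed

lemma poly_approx_add:
  assumes "poly_approx I n f K N" "poly_approx I n g L N"
  shows "poly_approx I n (\<lambda>y. f y + g y) (K + L) N"
proof -
  obtain c d where
    c: "\<And>y. \<bar>f y - (\<Sum>i<n. c i * y ^ i)\<bar> \<le> K / I ^ n * (1 + I * \<bar>y\<bar>) ^ N" and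
    d: "\<And>y. \<bar>g y - (\<Sum>i<n. d i * y ^ i)\<bar> \<le> L / I ^ n * (1 + I * \<bar>y\<bar>) ^ N"
    using assms unfolding poly_approx_def by blast
  have "\<bar>f y + g y - (\<Sum>i<n. (c i + d i) * y ^ i)\<bar> \<le> (K + L) / I ^ n * (1 + I * \<bar>y\<bar>) ^ N" for y
    using abs_triangle_ineq[of "f y - (\<Sum>i<n. c i * y ^ i)" "g y - (\<Sum>i<n. d i * y ^ i)"] c[of y] d[of y]
    by (simp add: distrib_right sum.distrib add_divide_distrib algebra_simps)
  then show ?thesis
    unfolding poly_approx_def by (intro exI[of _ "\<lambda>i. c i + d i"]) blast
qed

lemma poly_approx_scale:
  assumes "poly_approx I n f K N"
  shows "poly_approx I n (\<lambda>y. a * f y) (\<bar>a\<bar> * K) N"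
proof -
  obtain c where c: "\<And>y. \<bar>f y - (\<Sum>i<n. c i * y ^ i)\<bar> \<le> K / I ^ n * (1 + I * \<bar>y\<bar>) ^ N"
    using assms unfolding poly_approx_def by blast
  have "\<bar>a * f y - (\<Sum>i<n. (a * c i) * y ^ i)\<bar> = \<bar>a\<bar> * \<bar>f y - (\<Sum>i<n. c i * y ^ i)\<bar>" for y
    by (simp add: abs_mult[symmetric] sum_distrib_left algebra_simps)
  then have "\<bar>a * f y - (\<Sum>i<n. (a * c i) * y ^ i)\<bar> \<le> \<bar>a\<bar> * K / I ^ n * (1 + I * \<bar>y\<bar>) ^ N" for y
    using mult_left_mono[OF c[of y] abs_ge_zero[of a]] by simp
  then show ?thesis
    unfolding poly_approx_def by (intro exI[of _ "\<lambda>i. a * c i"]) blast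
qed

lemma poly_approx_sum:
  assumes "finite S" "\<And>j. j \<in> S \<Longrightarrow> poly_approx I n (f j) (K j) N"
  shows "poly_approx I n (\<lambda>y. \<Sum>j\<in>S. f j y) (\<Sum>j\<in>S. K j) N"
  using assms
proof (induction S rule: finite_induct)
  case empty
  show ?case
    unfolding poly_approx_def by (intro exI[of _ "\<lambda>_. 0"]) simp
next
  case (insert x S)
  then show ?case
    using poly_approx_add[of I n "f x" "K x" N "\<lambda>y. \<Sum>j\<in>S. f j y"] by simp
qed

lemma poly_approx_of_bound:
  "(\<And>y. \<bar>f y\<bar> \<le> K / I ^ n * (1 + I * \<bar>y\<bar>) ^ N) \<Longrightarrow> poly_approx I n f K N"
  unfolding poly_approx_def by (intro exI[of _ "\<lambda>_. 0"]) simp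

lemma abs_power_le_weight:
  fixes I y :: real
  assumes "I \<ge> 1" "n \<le> d"
  shows "\<bar>y\<bar> ^ d \<le> 1 / I ^ n * (1 + I * \<bar>y\<bar>) ^ d"
proof -
  have "\<bar>y\<bar> ^ d * I ^ n \<le> \<bar>y\<bar> ^ d * I ^ d"
    using assms by (intro mult_left_mono power_increasing) auto
  also have "\<dots> = (I * \<bar>y\<bar>) ^ d"
    by (simp add: power_mult_distrib)
  also have "\<dots> \<le> (1 + I * \<bar>y\<bar>) ^ d"
    using assms by (intro power_mono) auto
  finally show ?thesis
    using assms by (simp add: field_simps)
qed

lemma poly_approx_power:
  assumes "I \<ge> 1" "d \<le> N"
  shows "poly_approx I n (\<lambda>y. y ^ d) 1 N"
proof (cases "d < n")
  case True
  have "(\<Sum>i<n. (if i = d then 1 else 0) * y ^ i) = (\<Sum>i<n. if i = d then y ^ i else 0)" for y :: real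
    by (intro sum.cong) auto
  then have "(\<Sum>i<n. (if i = d then 1 else 0) * y ^ i) = y ^ d" for y :: real
    using True by simp
  then show ?thesis
    unfolding poly_approx_def using assms
    by (intro exI[of _ "\<lambda>i. if i = d then 1 else 0"]) simp
next
  case False
  have "poly_approx I n (\<lambda>y. y ^ d) 1 d"
    using abs_power_le_weight[OF assms(1), of n d] False
    by (intro poly_approx_of_bound) (simp add: power_abs)
  then show ?thesis
    by (rule poly_approx_mono) (use assms in auto)
qed

lemma poly_approx_hermite_expansion:
  assumes I: "I_s k s \<ge> 1"
    and approx: "\<And>j. j \<le> Mf \<Longrightarrow> poly_approx (I_s k s) n (\<lambda>y. y ^ j * g y) K N"
    and coeff: "\<And>m. m \<le> Mf \<Longrightarrow> \<bar>c m\<bar> \<le> B"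
  shows "poly_approx (I_s k s) n (\<lambda>y. \<Sum>m = 0..Mf. c m * H_poly k m s y * g y)
           (B * (\<Sum>m = 0..Mf. \<Sum>l = 0..m div 2. fact m / (fact l * fact (m - 2 * l))) * K) N"
proof -
  define a where "a = I_s k s powr (-2)"
  define h where "h m l = (fact m / (fact l * fact (m - 2 * l)) :: real)" for m l
  have K: "K \<ge> 0"
    using poly_approx_nonneg[OF approx[of 0]] I by simp
  have "a \<le> 1"
    unfolding a_def using I powr_mono[of "-2" 0 "I_s k s"] by simp
  then have a: "\<bar>(- a) ^ l\<bar> \<le> 1" for l
    unfolding a_def by (simp add: power_abs power_le_one)
  have expand: "c m * H_poly k m s y * g y = (\<Sum>l = 0..m div 2. (c m * h m l * (- a) ^ l) * (y ^ (m - 2 * l) * g y))"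
    for m y
    unfolding H_poly_def h_def a_def sum_distrib_left sum_distrib_right by (simp add: ac_simps)
  have approx_sum: "poly_approx (I_s k s) n (\<lambda>y. \<Sum>m = 0..Mf. c m * H_poly k m s y * g y)
      (\<Sum>m = 0..Mf. \<Sum>l = 0..m div 2. \<bar>c m * h m l * (- a) ^ l\<bar> * K) N"
    unfolding expand using approx
    by (intro poly_approx_sum poly_approx_scale) auto
  have "\<bar>c m * h m l * (- a) ^ l\<bar> * K \<le> B * h m l * K" if "m \<le> Mf" for m l
  proof -
    have "\<bar>c m * h m l * (- a) ^ l\<bar> \<le> B * h m l * 1"
      unfolding abs_mult using coeff[OF that] a[of l] by (intro mult_mono) (auto simp: h_def)
    then show ?thesis using K by (simp add: mult_right_mono)
  qed
  then have "(\<Sum>m = 0..Mf. \<Sum>l = 0..m div 2. \<bar>c m * h m l * (- a) ^ l\<bar> * K) \<le>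
      (\<Sum>m = 0..Mf. \<Sum>l = 0..m div 2. B * h m l * K)"
    by (intro sum_mono) auto
  also have "\<dots> = B * (\<Sum>m = 0..Mf. \<Sum>l = 0..m div 2. h m l) * K"
    by (simp add: sum_distrib_left sum_distrib_right)
  finally have "(\<Sum>m = 0..Mf. \<Sum>l = 0..m div 2. \<bar>c m * h m l * (- a) ^ l\<bar> * K) \<le>
      B * (\<Sum>m = 0..Mf. \<Sum>l = 0..m div 2. h m l) * K" .
  then show ?thesis
    using poly_approx_mono[OF approx_sum] I unfolding h_def by simp
qed

lemma abs_power_mult_weight_le:
  fixes I y M :: real
  assumes I: "I \<ge> 1" and "real n \<le> M" "M \<ge> 0" "j + nat \<lceil>M\<rceil> \<le> N"
  shows "\<bar>y\<bar> ^ j * (I powr (- M) + \<bar>y\<bar> powr M) \<le> 2 / I ^ n * (1 + I * \<bar>y\<bar>) ^ N"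
proof -
  define t where "t = I * \<bar>y\<bar>"
  have t: "t \<ge> 0" "\<bar>y\<bar> \<le> t" "\<bar>y\<bar> = t / I"
    unfolding t_def using I by (auto simp: mult_le_cancel_right1)
  have "I powr (- M) + \<bar>y\<bar> powr M = I powr (- M) * (1 + t powr M)"
    unfolding t(3) using I t(1) by (simp add: powr_divide powr_minus field_simps)
  moreover have "I powr (- M) \<le> 1 / I ^ n"
    using I assms(2) powr_mono[of "- M" "- real n" I] by (simp add: powr_minus powr_realpow divide_inverse)
  moreover have "1 + t powr M \<le> 2 * (1 + t) ^ nat \<lceil>M\<rceil>"
  proof -
    have "t powr M \<le> (1 + t) powr real (nat \<lceil>M\<rceil>)"
      using t(1) assms(3) order.trans[OF powr_mono2 powr_mono] by (simp add: powr_mono2 powr_mono)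
    then have "t powr M \<le> (1 + t) ^ nat \<lceil>M\<rceil>"
      using t(1) by (simp add: powr_realpow)
    moreover have "1 \<le> (1 + t) ^ nat \<lceil>M\<rceil>"
      using t(1) by (simp add: one_le_power)
    ultimately show ?thesis
      by linarith
  qed
  moreover have "\<bar>y\<bar> ^ j \<le> (1 + t) ^ j"
    using t by (intro power_mono) auto
  ultimately have "\<bar>y\<bar> ^ j * (I powr (- M) + \<bar>y\<bar> powr M) \<le> (1 + t) ^ j * (1 / I ^ n) * (2 * (1 + t) ^ nat \<lceil>M\<rceil>)"
    using t(1) I by (simp only: mult.assoc) (intro mult_mono; simp)
  also have "\<dots> = 2 / I ^ n * (1 + t) ^ (j + nat \<lceil>M\<rceil>)"
    by (simp add: power_add)
  also have "\<dots> \<le> 2 / I ^ n * (1 + t) ^ N"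
    using t(1) I assms(4) by (intro mult_left_mono power_increasing) auto
  finally show ?thesis
    unfolding t_def .
qed

lemma abs_le_snorm:
  assumes "snorm p k s g \<le> ereal c"
  shows "\<bar>g y\<bar> \<le> c * (I_s k s powr (- M_exp p k) + \<bar>y\<bar> powr M_exp p k)"
proof -
  have "\<bar>g y\<bar> / (I_s k s powr (- M_exp p k) + \<bar>y\<bar> powr M_exp p k) \<le> c"
    using assms unfolding snorm_def by (simp add: SUP_le_iff)
  moreover have "I_s k s powr (- M_exp p k) + \<bar>y\<bar> powr M_exp p k > 0"
    using I_s_pos[of k s] by (simp add: add_pos_nonneg)
  ultimately show ?thesis
    by (simp add: divide_le_eq)
qed

lemma poly_approx_mult_snorm:
  assumes I: "I_s k s \<ge> 1"
    and g: "\<And>y. \<bar>g y\<bar> \<le> L * \<bar>y\<bar> ^ d"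
    and r: "snorm p k s r \<le> ereal \<epsilon>"
    and M: "real n \<le> M_exp p k" "M_exp p k \<ge> 0" "d + nat \<lceil>M_exp p k\<rceil> \<le> N"
  shows "poly_approx (I_s k s) n (\<lambda>y. g y * r y) (2 * L * \<epsilon>) N"
proof (rule poly_approx_of_bound)
  fix y
  have "\<bar>g y * r y\<bar> \<le> (L * \<bar>y\<bar> ^ d) * (\<epsilon> * (I_s k s powr (- M_exp p k) + \<bar>y\<bar> powr M_exp p k))"
    unfolding abs_mult using g[of y] abs_le_snorm[OF r, of y]
    by (intro mult_mono) (auto intro: order_trans[OF abs_ge_zero])
  also have "\<dots> = (L * \<epsilon>) * (\<bar>y\<bar> ^ d * (I_s k s powr (- M_exp p k) + \<bar>y\<bar> powr M_exp p k))"
    by (simp add: ac_simps)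
  also have "\<dots> \<le> (L * \<epsilon>) * (2 / I_s k s ^ n * (1 + I_s k s * \<bar>y\<bar>) ^ N)"
  proof (rule mult_left_mono)
    show "0 \<le> L * \<epsilon>"
      using order_trans[OF abs_ge_zero g[of 1]] order_trans[OF abs_ge_zero abs_le_snorm[OF r, of 0]]
        I_s_pos[of k s] by (simp add: zero_le_mult_iff)
  qed (rule abs_power_mult_weight_le[OF I M])
  finally show "\<bar>g y * r y\<bar> \<le> 2 * L * \<epsilon> / I_s k s ^ n * (1 + I_s k s * \<bar>y\<bar>) ^ N"
    by (simp add: ac_simps)
qed

section \<open>Expansion of \<open>e_b\<close>\<close>

lemma e_b_denom_pos:
  fixes p b y :: real
  assumes "p > 1" "b \<ge> 0"
  shows "p - 1 + b * y ^ (2 * k) > 0"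
  using assms zero_le_even_power[of "2 * k" y] by (simp add: add_pos_nonneg)

lemma abs_e_b_le:
  assumes "p > 1" "b \<ge> 0"
  shows "\<bar>e_b p k b y\<bar> \<le> 1 / (p - 1)"
  using e_b_denom_pos[OF assms, of y k] assms
  by (simp add: e_b_def frac_le)

lemma abs_power_e_b_le:
  assumes "p > 1" "b > 0"
  shows "\<bar>y ^ (2 * k) * e_b p k b y\<bar> \<le> 1 / b"
proof -
  have "y ^ (2 * k) \<ge> 0" "p - 1 + b * y ^ (2 * k) > 0"
    using e_b_denom_pos[of p b y k] assms by (simp_all add: zero_le_even_power)
  then show ?thesis
    using assms by (simp add: e_b_def abs_mult divide_simps)
qed

lemma power_e_b_expand:
  assumes "p > 1" "b \<ge> 0"
  shows "y ^ d * e_b p k b y = 1 / (p - 1) * y ^ d - b / (p - 1) * (y ^ (d + 2 * k) * e_b p k b y)"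
proof -
  have "(p - 1 + b * y ^ (2 * k)) * e_b p k b y = 1"
    using e_b_denom_pos[OF assms, of y k] unfolding e_b_def by simp
  moreover have "(p - 1) * (y ^ d * e_b p k b y) =
      y ^ d * ((p - 1 + b * y ^ (2 * k)) * e_b p k b y) - b * (y ^ (d + 2 * k) * e_b p k b y)"
    by (simp add: power_add algebra_simps)
  ultimately have "(p - 1) * (y ^ d * e_b p k b y) = y ^ d - b * (y ^ (d + 2 * k) * e_b p k b y)"
    by simp
  then have "y ^ d * e_b p k b y = (y ^ d - b * (y ^ (d + 2 * k) * e_b p k b y)) / (p - 1)"
    using assms by (simp add: eq_divide_eq mult.commute)
  then show ?thesis
    by (simp add: diff_divide_distrib)
qed

lemma one_add_mult_power_le:
  fixes c :: real
  assumes "c \<ge> 0" "j < m"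
  shows "1 + c * (1 + c) ^ j \<le> (1 + c) ^ m"
proof -
  have "1 + c * (1 + c) ^ j \<le> (1 + c) ^ j + c * (1 + c) ^ j"
    using assms by (simp add: one_le_power)
  also have "\<dots> = (1 + c) ^ Suc j"
    by (simp add: algebra_simps)
  also have "\<dots> \<le> (1 + c) ^ m"
    using assms by (intro power_increasing) auto
  finally show ?thesis .
qed

lemma poly_approx_power_e_b:
  assumes "p > 1" "b \<ge> 0" "I \<ge> 1" "k \<ge> 1" "n + 2 * k \<le> N" "d \<le> N"
  shows "poly_approx I n (\<lambda>y. y ^ d * e_b p k b y) (1 / (p - 1) * (1 + b / (p - 1)) ^ (n - d)) N"
  using assms(6)
proof (induction "n - d" arbitrary: d rule: less_induct)
  case less
  have c: "b / (p - 1) \<ge> 0" using assms by simp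
  show ?case
  proof (cases "n \<le> d")
    case True
    have "poly_approx I n (\<lambda>y. y ^ d * e_b p k b y) (1 / (p - 1)) d"
    proof (rule poly_approx_of_bound)
      fix y
      have "\<bar>y ^ d * e_b p k b y\<bar> \<le> \<bar>y\<bar> ^ d * (1 / (p - 1))"
        unfolding abs_mult power_abs by (rule mult_left_mono[OF abs_e_b_le[OF assms(1,2)]]) simp
      also have "\<dots> \<le> 1 / I ^ n * (1 + I * \<bar>y\<bar>) ^ d * (1 / (p - 1))"
        using assms by (intro mult_right_mono abs_power_le_weight True) auto
      finally show "\<bar>y ^ d * e_b p k b y\<bar> \<le> 1 / (p - 1) / I ^ n * (1 + I * \<bar>y\<bar>) ^ d"
        by (simp add: mult.commute)
    qed
    then show ?thesis
      by (rule poly_approx_mono) (use True less.prems assms in auto)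
  next
    case False
    then have lt: "n - (d + 2 * k) < n - d" using assms by simp
    have approx: "poly_approx I n (\<lambda>y. 1 / (p - 1) * y ^ d + (- (b / (p - 1))) * (y ^ (d + 2 * k) * e_b p k b y))
       (\<bar>1 / (p - 1)\<bar> * 1 + \<bar>- (b / (p - 1))\<bar> * (1 / (p - 1) * (1 + b / (p - 1)) ^ (n - (d + 2 * k)))) N"
      using False assms less.prems
      by (intro poly_approx_add poly_approx_scale poly_approx_power less.hyps[OF lt]) auto
    have "1 + b / (p - 1) * (1 + b / (p - 1)) ^ (n - (d + 2 * k)) \<le> (1 + b / (p - 1)) ^ (n - d)"
      using c lt by (rule one_add_mult_power_le)
    then have "1 / (p - 1) * (1 + b / (p - 1) * (1 + b / (p - 1)) ^ (n - (d + 2 * k)))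
        \<le> 1 / (p - 1) * (1 + b / (p - 1)) ^ (n - d)"
      using assms(1) by (intro mult_left_mono) auto
    then have "\<bar>1 / (p - 1)\<bar> * 1 + \<bar>- (b / (p - 1))\<bar> * (1 / (p - 1) * (1 + b / (p - 1)) ^ (n - (d + 2 * k)))
        \<le> 1 / (p - 1) * (1 + b / (p - 1)) ^ (n - d)"
      using assms(1,2) by (simp add: distrib_left mult.left_commute)
    moreover have "(\<lambda>y. y ^ d * e_b p k b y) =
        (\<lambda>y. 1 / (p - 1) * y ^ d + (- (b / (p - 1))) * (y ^ (d + 2 * k) * e_b p k b y))"
      by (rule ext, subst power_e_b_expand[OF assms(1,2)]) simp
    ultimately show ?thesis
      using poly_approx_mono[OF approx] assms by simp
  qed
qed

definition e_b_comb :: "real \<Rightarrow> nat \<Rightarrow> real \<Rightarrow> real \<Rightarrow> real \<Rightarrow> nat \<Rightarrow> real \<Rightarrow> real" where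
  "e_b_comb p k b A B d y = A * y ^ d + B * (y ^ (d + 2 * k) * e_b p k b y)"

lemma power_mult_e_b_comb: "y ^ j * e_b_comb p k b A B d y = e_b_comb p k b A B (d + j) y"
  unfolding e_b_comb_def by (simp add: power_add algebra_simps)

lemma poly_approx_e_b_comb:
  assumes "p > 1" "b \<ge> 0" "I \<ge> 1" "k \<ge> 1" "n + 2 * k \<le> N" "d + 2 * k \<le> N"
    and "\<bar>A\<bar> \<le> L" "\<bar>B\<bar> \<le> L"
  shows "poly_approx I n (e_b_comb p k b A B d) (L * (1 + 1 / (p - 1) * (1 + b / (p - 1)) ^ n)) N"
proof -
  define E where "E m = 1 / (p - 1) * (1 + b / (p - 1)) ^ m" for m
  have "poly_approx I n (e_b_comb p k b A B d) (\<bar>A\<bar> * 1 + \<bar>B\<bar> * E (n - (d + 2 * k))) N"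
    unfolding E_def e_b_comb_def[abs_def] using assms
    by (intro poly_approx_add poly_approx_scale poly_approx_power poly_approx_power_e_b) auto
  moreover have "(1 + b / (p - 1)) ^ (n - (d + 2 * k)) \<le> (1 + b / (p - 1)) ^ n"
    using assms by (intro power_increasing) auto
  then have "E (n - (d + 2 * k)) \<le> E n" "E (n - (d + 2 * k)) \<ge> 0"
    unfolding E_def using assms by (simp_all add: divide_right_mono)
  then have "\<bar>B\<bar> * E (n - (d + 2 * k)) \<le> L * E n"
    using assms(8) by (intro mult_mono) auto
  then have "\<bar>A\<bar> * 1 + \<bar>B\<bar> * E (n - (d + 2 * k)) \<le> L * (1 + E n)"
    using assms(7) by (simp add: distrib_left)
  ultimately show ?thesis
    unfolding E_def using assms(3) by (elim poly_approx_mono) auto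
qed

lemma abs_e_b_comb_le:
  assumes "p > 1" "b > 0"
  shows "\<bar>e_b_comb p k b A B d y\<bar> \<le> (\<bar>A\<bar> + \<bar>B\<bar> / b) * \<bar>y\<bar> ^ d"
proof -
  have "\<bar>B * (y ^ (d + 2 * k) * e_b p k b y)\<bar> = \<bar>B\<bar> * \<bar>y\<bar> ^ d * \<bar>y ^ (2 * k) * e_b p k b y\<bar>"
    by (simp add: abs_mult power_add power_abs)
  also have "\<dots> \<le> \<bar>B\<bar> * \<bar>y\<bar> ^ d * (1 / b)"
    by (intro mult_left_mono abs_power_e_b_le assms) simp
  finally show ?thesis
    unfolding e_b_comb_def
    by (simp add: abs_mult power_abs distrib_right order_trans[OF abs_triangle_ineq])
qed

section \<open>The term \<open>R_op\<close>\<close>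

definition alpha1 :: "real \<Rightarrow> nat \<Rightarrow> real \<Rightarrow> real" where
  "alpha1 p k b = - 2 * real k * (2 * real k - 1) * b / (p - 1)"

definition alpha2 :: "real \<Rightarrow> nat \<Rightarrow> real \<Rightarrow> real" where
  "alpha2 p k b = 4 * p * (real k)\<^sup>2 * b\<^sup>2 / (p - 1)\<^sup>2"

definition alpha3 :: "real \<Rightarrow> nat \<Rightarrow> real \<Rightarrow> real" where
  "alpha3 p k b = - 2 * p * real k * (2 * real k - 1) * b / (p - 1)"

definition alpha4 :: "real \<Rightarrow> nat \<Rightarrow> real \<Rightarrow> real" where
  "alpha4 p k b = 4 * p * (2 * p - 1) * (real k)\<^sup>2 * b\<^sup>2 / (p - 1)\<^sup>2"

lemma R_op_eq:
  assumes "k \<ge> 1"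
  shows "R_op p k s b q y = I_s k s powr (-2) *
    (e_b_comb p k b (alpha1 p k b) (alpha2 p k b) (2 * k - 2) y +
     e_b_comb p k b (alpha3 p k b) (alpha4 p k b) (2 * k - 2) y * q y)"
proof -
  have "y ^ (2 * k - 2 + 2 * k) = y ^ (2 * k - 2) * y ^ (2 * k)"
    by (rule power_add)
  then show ?thesis
    unfolding R_op_def alpha1_def alpha2_def alpha3_def alpha4_def e_b_comb_def Let_def
    by (simp add: algebra_simps)
qed

lemma alpha_bounded:
  obtains \<Lambda> where "\<And>b. 0 < b \<Longrightarrow> b \<le> B \<Longrightarrow>
    \<bar>alpha1 p k b\<bar> \<le> \<Lambda> \<and> \<bar>alpha2 p k b\<bar> \<le> \<Lambda> \<and> \<bar>alpha3 p k b\<bar> \<le> \<Lambda> \<and> \<bar>alpha4 p k b\<bar> \<le> \<Lambda> \<and>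
    \<bar>alpha4 p k b\<bar> / b \<le> \<Lambda>"
proof
  define c1 c2 c3 c4 where
    "c1 = - 2 * real k * (2 * real k - 1) / (p - 1)" and "c2 = 4 * p * (real k)\<^sup>2 / (p - 1)\<^sup>2" and
    "c3 = - 2 * p * real k * (2 * real k - 1) / (p - 1)" and
    "c4 = 4 * p * (2 * p - 1) * (real k)\<^sup>2 / (p - 1)\<^sup>2"
  define S where "S = B + B\<^sup>2"
  fix b :: real
  assume b: "0 < b" "b \<le> B"
  have "b\<^sup>2 \<le> B\<^sup>2"
    using b by (intro power_mono) auto
  then have "b \<le> S" "b\<^sup>2 \<le> S"
    using b zero_le_power2[of B] unfolding S_def by linarith+
  then have le: "\<bar>c * b\<bar> \<le> \<bar>c\<bar> * S" "\<bar>c * b\<^sup>2\<bar> \<le> \<bar>c\<bar> * S" for c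
    using b by (simp_all add: abs_mult mult_left_mono)
  have "alpha1 p k b = c1 * b" "alpha2 p k b = c2 * b\<^sup>2" "alpha3 p k b = c3 * b"
    "alpha4 p k b = c4 * b\<^sup>2" "\<bar>alpha4 p k b\<bar> / b = \<bar>c4 * b\<bar>"
    using b unfolding alpha1_def alpha2_def alpha3_def alpha4_def c1_def c2_def c3_def c4_def
    by (simp_all add: power2_eq_square abs_mult)
  moreover have "0 \<le> \<bar>c\<bar> * S" for c
    using b unfolding S_def by simp
  ultimately show "\<bar>alpha1 p k b\<bar> \<le> (\<bar>c1\<bar> + \<bar>c2\<bar> + \<bar>c3\<bar> + \<bar>c4\<bar>) * S \<and>
    \<bar>alpha2 p k b\<bar> \<le> (\<bar>c1\<bar> + \<bar>c2\<bar> + \<bar>c3\<bar> + \<bar>c4\<bar>) * S \<and>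
    \<bar>alpha3 p k b\<bar> \<le> (\<bar>c1\<bar> + \<bar>c2\<bar> + \<bar>c3\<bar> + \<bar>c4\<bar>) * S \<and>
    \<bar>alpha4 p k b\<bar> \<le> (\<bar>c1\<bar> + \<bar>c2\<bar> + \<bar>c3\<bar> + \<bar>c4\<bar>) * S \<and>
    \<bar>alpha4 p k b\<bar> / b \<le> (\<bar>c1\<bar> + \<bar>c2\<bar> + \<bar>c3\<bar> + \<bar>c4\<bar>) * S"
    unfolding distrib_right
    using le[of c1] le[of c2] le[of c3] le[of c4] by (smt (verit))
qed

lemma M_floor_le_M_exp:
  assumes "p > 1" "n \<le> M_floor p k"
  shows "real n \<le> M_exp p k"
proof -
  have "M_exp p k \<ge> 0"
    using assms(1) unfolding M_exp_def by simp
  then have "real (M_floor p k) \<le> M_exp p k"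
    unfolding M_floor_def by linarith
  then show ?thesis
    using assms(2) by linarith
qed

text \<open>Collects the contributions of the \<open>q\<close>-free part of \<open>R_op\<close>, of the modes \<open>P_proj k m s q\<close>
  and of \<open>q_minus\<close>; the factor \<open>I\<^sup>-\<^sup>2\<close> absorbs \<open>I\<^sup>-\<^sup>\<delta>\<close> only because \<open>\<delta> \<le> 1\<close>.\<close>
lemma prefactor_sum_le:
  fixes I \<delta> \<Lambda> \<kappa> H :: real
  assumes I: "I \<ge> 1" and \<delta>: "0 < \<delta>" "\<delta> \<le> 1" and \<Lambda>: "\<Lambda> \<ge> 0" and \<kappa>: "\<kappa> \<ge> 1" and H: "H \<ge> 0"
  shows "\<bar>I powr (-2)\<bar> * (\<Lambda> * \<kappa>) + \<bar>I powr (-2)\<bar> * (I powr (- \<delta>) * H * (\<Lambda> * \<kappa>)) +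
      \<bar>I powr (-2)\<bar> * (2 * (2 * \<Lambda>) * I powr (- \<delta>)) \<le> \<Lambda> * \<kappa> * (5 + H) * I powr (- 2 * \<delta>)"
proof -
  define J where "J = I powr (- 2 * \<delta>)"
  have J: "I powr (-2) \<le> J" "I powr (-2) * I powr (- \<delta>) \<le> J"
    unfolding J_def using I \<delta> by (auto simp: powr_add[symmetric] intro: powr_mono)
  have "4 * \<Lambda> \<le> 4 * \<Lambda> * \<kappa>"
    using mult_left_mono[OF \<kappa>, of "4 * \<Lambda>"] \<Lambda> by simp
  then have "(I powr (-2) * I powr (- \<delta>)) * (4 * \<Lambda>) \<le> J * (4 * \<Lambda> * \<kappa>)"
    by (rule mult_mono[OF J(2)]) (use \<Lambda> in \<open>simp_all add: J_def\<close>)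
  moreover have "I powr (-2) * (\<Lambda> * \<kappa>) \<le> J * (\<Lambda> * \<kappa>)"
    using J \<kappa> \<Lambda> by (intro mult_right_mono) auto
  moreover have "(I powr (-2) * I powr (- \<delta>)) * (H * (\<Lambda> * \<kappa>)) \<le> J * (H * (\<Lambda> * \<kappa>))"
    using J \<kappa> \<Lambda> H by (intro mult_right_mono) auto
  ultimately show ?thesis
    unfolding J_def[symmetric] by (simp add: algebra_simps)
qed

lemma poly_approx_R_op:
  fixes p b \<delta> \<Lambda> :: real and k n :: nat
  defines "\<kappa> \<equiv> 1 + 1 / (p - 1) * (1 + b / (p - 1)) ^ n"
    and "H \<equiv> (\<Sum>m = 0..M_floor p k. \<Sum>l = 0..m div 2. fact m / (fact l * fact (m - 2 * l)) :: real)"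
  assumes p: "p > 1" and k: "k \<ge> 1" and I: "I_s k s \<ge> 1" and \<delta>: "0 < \<delta>" "\<delta> \<le> 1" and b: "b > 0"
    and \<alpha>: "\<bar>alpha1 p k b\<bar> \<le> \<Lambda>" "\<bar>alpha2 p k b\<bar> \<le> \<Lambda>" "\<bar>alpha3 p k b\<bar> \<le> \<Lambda>" "\<bar>alpha4 p k b\<bar> \<le> \<Lambda>"
      "\<bar>alpha4 p k b\<bar> / b \<le> \<Lambda>"
    and proj: "\<And>m. m \<le> M_floor p k \<Longrightarrow> \<bar>P_proj k m s q\<bar> \<le> I_s k s powr (- \<delta>)"
    and rem: "snorm p k s (q_minus p k s q) \<le> ereal (I_s k s powr (- \<delta>))"
    and n: "n \<le> M_floor p k" and N: "4 * k + M_floor p k + nat \<lceil>M_exp p k\<rceil> \<le> N"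
  shows "poly_approx (I_s k s) n (R_op p k s b q) (\<Lambda> * \<kappa> * (5 + H) * I_s k s powr (- 2 * \<delta>)) N"
proof -
  define a where "a = I_s k s powr (-2)"
  define d where "d = 2 * k - 2"
  define G1 where "G1 = e_b_comb p k b (alpha1 p k b) (alpha2 p k b)"
  define G3 where "G3 = e_b_comb p k b (alpha3 p k b) (alpha4 p k b)"
  have R: "R_op p k s b q = (\<lambda>y. a * G1 d y +
      a * (\<Sum>m = 0..M_floor p k. P_proj k m s q * H_poly k m s y * G3 d y) + a * (G3 d y * q_minus p k s q y))"
    unfolding R_op_eq[OF k, abs_def] q_minus_def G1_def G3_def a_def d_def
    by (simp add: sum_distrib_left sum_distrib_right algebra_simps)
  have G: "poly_approx (I_s k s) n (G1 (d + j)) (\<Lambda> * \<kappa>) N" "poly_approx (I_s k s) n (G3 (d + j)) (\<Lambda> * \<kappa>) N"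
    if "j \<le> M_floor p k" for j
    unfolding G1_def G3_def \<kappa>_def d_def using p k I b \<alpha> that N n
    by (intro poly_approx_e_b_comb; simp)+
  have "poly_approx (I_s k s) n (\<lambda>y. \<Sum>m = 0..M_floor p k. P_proj k m s q * H_poly k m s y * G3 d y)
      (I_s k s powr (- \<delta>) * H * (\<Lambda> * \<kappa>)) N"
    unfolding H_def using G(2) I proj
    by (intro poly_approx_hermite_expansion) (simp_all add: G3_def power_mult_e_b_comb)
  moreover have "poly_approx (I_s k s) n (\<lambda>y. G3 d y * q_minus p k s q y) (2 * (2 * \<Lambda>) * I_s k s powr (- \<delta>)) N"
  proof (rule poly_approx_mult_snorm[OF I _ rem])
    show "\<bar>G3 d y\<bar> \<le> 2 * \<Lambda> * \<bar>y\<bar> ^ d" for y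
    proof -
      have "(\<bar>alpha3 p k b\<bar> + \<bar>alpha4 p k b\<bar> / b) * \<bar>y\<bar> ^ d \<le> 2 * \<Lambda> * \<bar>y\<bar> ^ d"
        using \<alpha>(3,5) by (intro mult_right_mono) auto
      then show ?thesis
        unfolding G3_def by (rule order_trans[OF abs_e_b_comb_le[OF p b]])
    qed
    show "real n \<le> M_exp p k" "M_exp p k \<ge> 0" "d + nat \<lceil>M_exp p k\<rceil> \<le> N"
      using M_floor_le_M_exp[OF p n] p N by (simp_all add: M_exp_def d_def)
  qed
  ultimately have approx: "poly_approx (I_s k s) n (R_op p k s b q)
      (\<bar>a\<bar> * (\<Lambda> * \<kappa>) + \<bar>a\<bar> * (I_s k s powr (- \<delta>) * H * (\<Lambda> * \<kappa>)) +
       \<bar>a\<bar> * (2 * (2 * \<Lambda>) * I_s k s powr (- \<delta>))) N"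
    unfolding R using G(1)[of 0] by (intro poly_approx_add poly_approx_scale) auto
  have "\<Lambda> \<ge> 0" "\<kappa> \<ge> 1" "H \<ge> 0"
    using \<alpha>(1) p b unfolding \<kappa>_def H_def by (auto intro!: sum_nonneg)
  then show ?thesis
    by (intro poly_approx_mono[OF approx[unfolded a_def] prefactor_sum_le[OF I \<delta>]] order_refl I_s_pos)
qed

lemma poly_approx_R_op_in_V:
  assumes p: "p > 1" and k: "k \<ge> 1" and b0: "b0 > 0"
  obtains C N where "C \<ge> 0"
    "\<And>\<delta> s q b n. 0 < \<delta> \<Longrightarrow> \<delta> \<le> 1 \<Longrightarrow> s \<ge> 0 \<Longrightarrow> in_V p k \<delta> b0 s q b \<Longrightarrow> n \<le> M_floor p k \<Longrightarrow>
       poly_approx (I_s k s) n (R_op p k s b q) (C * I_s k s powr (- 2 * \<delta>)) N"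
proof -
  obtain \<Lambda> where \<alpha>: "\<And>b. 0 < b \<Longrightarrow> b \<le> 2 * b0 \<Longrightarrow>
      \<bar>alpha1 p k b\<bar> \<le> \<Lambda> \<and> \<bar>alpha2 p k b\<bar> \<le> \<Lambda> \<and> \<bar>alpha3 p k b\<bar> \<le> \<Lambda> \<and> \<bar>alpha4 p k b\<bar> \<le> \<Lambda> \<and>
      \<bar>alpha4 p k b\<bar> / b \<le> \<Lambda>"
    using alpha_bounded by blast
  define H where "H = (\<Sum>m = 0..M_floor p k. \<Sum>l = 0..m div 2. fact m / (fact l * fact (m - 2 * l)) :: real)"
  define \<kappa> where "\<kappa> = 1 + 1 / (p - 1) * (1 + 2 * b0 / (p - 1)) ^ M_floor p k"
  have \<Lambda>: "\<Lambda> \<ge> 0"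
    using \<alpha>[of b0] b0 by (auto intro: order_trans[OF abs_ge_zero])
  have H: "H \<ge> 0"
    unfolding H_def by (intro sum_nonneg) auto
  show thesis
  proof (rule that[of "\<Lambda> * \<kappa> * (5 + H)"])
    show "\<Lambda> * \<kappa> * (5 + H) \<ge> 0"
      unfolding \<kappa>_def using \<Lambda> H p b0 by simp
  next
    fix \<delta> s q b n
    assume \<delta>: "0 < \<delta>" "\<delta> \<le> 1" and s: "s \<ge> 0" and V: "in_V p k \<delta> b0 s q b" and n: "n \<le> M_floor p k"
    have I: "I_s k s \<ge> 1"
      using k s by (rule I_s_ge_1)
    have b: "0 < b" "b \<le> 2 * b0"
      using V b0 unfolding in_V_def by auto
    have "I_s k s powr (- 2 * \<delta>) \<le> I_s k s powr (- \<delta>)"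
      using I \<delta> by (intro powr_mono) auto
    then have proj: "\<bar>P_proj k m s q\<bar> \<le> I_s k s powr (- \<delta>)" if "m \<le> M_floor p k" for m
      using V that unfolding in_V_def by (cases "m = 2 * k") auto
    have "(1 + b / (p - 1)) ^ n \<le> (1 + 2 * b0 / (p - 1)) ^ M_floor p k"
      using b p n by (intro order_trans[OF power_mono power_increasing]) (auto simp: divide_right_mono)
    then have "\<Lambda> * (1 + 1 / (p - 1) * (1 + b / (p - 1)) ^ n) * (5 + H) * I_s k s powr (- 2 * \<delta>)
        \<le> \<Lambda> * \<kappa> * (5 + H) * I_s k s powr (- 2 * \<delta>)"
      unfolding \<kappa>_def using p \<Lambda> H by (intro mult_right_mono mult_left_mono) (auto simp: divide_right_mono)
    moreover have "poly_approx (I_s k s) n (R_op p k s b q)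
        (\<Lambda> * (1 + 1 / (p - 1) * (1 + b / (p - 1)) ^ n) * (5 + H) * I_s k s powr (- 2 * \<delta>))
        (4 * k + M_floor p k + nat \<lceil>M_exp p k\<rceil>)"
      unfolding H_def using p k I \<delta> b \<alpha>[OF b] proj V n unfolding in_V_def
      by (intro poly_approx_R_op) auto
    ultimately show "poly_approx (I_s k s) n (R_op p k s b q) (\<Lambda> * \<kappa> * (5 + H) * I_s k s powr (- 2 * \<delta>))
        (4 * k + M_floor p k + nat \<lceil>M_exp p k\<rceil>)"
      using I_s_pos poly_approx_mono by blast
  qed
qed

lemma R_op_measurable: "q \<in> borel_measurable borel \<Longrightarrow> R_op p k s b q \<in> borel_measurable borel"
  unfolding R_op_def[abs_def] Let_def e_b_def by measurable

lemma P_proj_R_op_le: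
  assumes "p > 1" "k \<ge> 1" "b0 > 0"
  obtains C where "C > 0"
    "\<And>\<delta> s q b n. 0 < \<delta> \<Longrightarrow> \<delta> \<le> 1 \<Longrightarrow> s \<ge> 0 \<Longrightarrow> in_V p k \<delta> b0 s q b \<Longrightarrow> n \<le> M_floor p k \<Longrightarrow>
       \<bar>P_proj k n s (R_op p k s b q)\<bar> \<le> C * I_s k s powr (- 2 * \<delta>)"
proof -
  obtain C N where C: "C \<ge> 0" and approx: "\<And>\<delta> s q b n. 0 < \<delta> \<Longrightarrow> \<delta> \<le> 1 \<Longrightarrow> s \<ge> 0 \<Longrightarrow>
      in_V p k \<delta> b0 s q b \<Longrightarrow> n \<le> M_floor p k \<Longrightarrow>
      poly_approx (I_s k s) n (R_op p k s b q) (C * I_s k s powr (- 2 * \<delta>)) N"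
    using poly_approx_R_op_in_V[of p k b0] assms by auto
  define C' where "C' = C * (\<Sum>n\<le>M_floor p k. hermite_proj_const n N) + 1"
  have "C' > 0"
    unfolding C'_def using C by (simp add: add_nonneg_pos sum_nonneg hermite_proj_const_nonneg)
  moreover have "\<bar>P_proj k n s (R_op p k s b q)\<bar> \<le> C' * I_s k s powr (- 2 * \<delta>)"
    if hyps: "0 < \<delta>" "\<delta> \<le> 1" "s \<ge> 0" "in_V p k \<delta> b0 s q b" "n \<le> M_floor p k" for \<delta> s q b n
  proof -
    have "R_op p k s b q \<in> borel_measurable borel"
      using hyps(4) unfolding in_V_def by (intro R_op_measurable) simp
    moreover obtain c where "\<And>y. \<bar>R_op p k s b q y - (\<Sum>i<n. c i * y ^ i)\<bar>
        \<le> C * I_s k s powr (- 2 * \<delta>) / I_s k s ^ n * (1 + I_s k s * \<bar>y\<bar>) ^ N"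
      using approx[OF hyps] unfolding poly_approx_def by blast
    ultimately have "\<bar>P_proj k n s (R_op p k s b q)\<bar> \<le> C * I_s k s powr (- 2 * \<delta>) * hermite_proj_const n N"
      by (rule P_proj_bound)
    also have "\<dots> = (C * hermite_proj_const n N) * I_s k s powr (- 2 * \<delta>)"
      by (simp add: ac_simps)
    also have "\<dots> \<le> C' * I_s k s powr (- 2 * \<delta>)"
    proof (rule mult_right_mono)
      have "hermite_proj_const n N \<le> (\<Sum>n\<le>M_floor p k. hermite_proj_const n N)"
        using hyps(5) by (intro member_le_sum hermite_proj_const_nonneg) auto
      from mult_left_mono[OF this C] show "C * hermite_proj_const n N \<le> C'"
        unfolding C'_def by linarith
    qed simp
    finally show ?thesis .
  qed
  ultimately show thesis
    using that by blast
qed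

theorem mainTheorem11:
  fixes p :: real and k :: nat and b0 :: real
  assumes "p > 1" and "k \<ge> 2" and "b0 > 0"
  shows "\<exists>\<delta>8 > 0. \<forall>\<delta>. 0 < \<delta> \<and> \<delta> < \<delta>8 \<longrightarrow>
           (\<exists>s8 \<ge> 1. \<exists>C > 0. \<forall>s0 \<ge> s8. \<forall>sbar.
              \<forall>(q :: real \<Rightarrow> real \<Rightarrow> real) (b :: real \<Rightarrow> real).
                (\<forall>s \<in> {s0..sbar}. in_V p k \<delta> b0 s (q s) (b s)) \<longrightarrow>
                (\<forall>s \<in> {s0..sbar}. \<forall>n \<le> M_floor p k.
                   \<bar>P_proj k n s (R_op p k s (b s) (q s))\<bar> \<le> C * (I_s k s) powr (- 2 * \<delta>)))"
proof -
  obtain C where C: "C > 0" and bound: "\<And>\<delta> s q b n. 0 < \<delta> \<Longrightarrow> \<delta> \<le> 1 \<Longrightarrow> s \<ge> 0 \<Longrightarrow>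
      in_V p k \<delta> b0 s q b \<Longrightarrow> n \<le> M_floor p k \<Longrightarrow>
      \<bar>P_proj k n s (R_op p k s b q)\<bar> \<le> C * I_s k s powr (- 2 * \<delta>)"
    using P_proj_R_op_le[of p k b0] assms by auto
  have "\<forall>s\<in>{s0..sbar}. \<forall>n \<le> M_floor p k.
      \<bar>P_proj k n s (R_op p k s (b s) (q s))\<bar> \<le> C * I_s k s powr (- 2 * \<delta>)"
    if "0 < \<delta>" "\<delta> < 1" "s0 \<ge> 1" "\<forall>s\<in>{s0..sbar}. in_V p k \<delta> b0 s (q s) (b s)"
    for \<delta> s0 sbar and q :: "real \<Rightarrow> real \<Rightarrow> real" and b :: "real \<Rightarrow> real"
    using that by (intro ballI allI impI bound) auto
  then show ?thesis
    using C by (intro exI[of _ 1] conjI allI impI exI[of _ C]) auto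
qed

end
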